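(* Let $(S, +)$ be a commutative semigroup, let $p$ be an idempotent in $(\beta S, +)$, and let $\langle C_n \rangle_{n=1}^\infty$ be a sequence of members of $p$. Then for each $i \in \mathbb{N}$ there exists a sequence $\langle x_{i, j}\rangle_{j=1}^\infty$ in $S$ with $\mathrm{FS}(\langle x_{i, j}\rangle_{j=1}^\infty) \subseteq C_i$, such that for every nonempty finite $F \subseteq \mathbb{N}$, $\sum_{i \in F} \langle x_{i, j}\rangle_{j=1}^\infty \subseteq C_{\min F}$, i.e. $\sum_{i\in F} x_{i,j_i} \in C_{\min F}$ for every choice of $j_i\in\mathbb{N}$ ($i\in F$).
   Context: $\beta S$ is the set of ultrafilters on the discrete semigroup $S$, with the extension of the operation $p+q = \{A \subseteq S : \{x \in S: -x+A \in q\} \in p\}$, where $-x+A=\{y\in S: x+y\in A\}$; $p$ is idempotent if $p+p=p$. For a sequence $\langle x_n\rangle_{n=1}^\infty$, $\mathrm{FS}(\langle x_n\rangle_{n=1}^\infty)=\{\sum_{n\in H}x_n : H \text{ a nonempty finite subset of } \mathbb{N}\}$. For finite $F\subseteq\mathbb{N}$ and sequences $Y_i$, $\sum_{i\in F} Y_i$ is the set of sums $\sum_{i\in F} a_i$ where $a_i$ is a term of $Y_i$. *)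

theory Defs
  imports Main
begin

definition is_ultrafilter :: "'a set set \<Rightarrow> bool" where
  "is_ultrafilter p \<longleftrightarrow>
     {} \<notin> p \<and> UNIV \<in> p \<and>
     (\<forall>A B. A \<in> p \<and> A \<subseteq> B \<longrightarrow> B \<in> p) \<and>
     (\<forall>A B. A \<in> p \<and> B \<in> p \<longrightarrow> A \<inter> B \<in> p) \<and>
     (\<forall>A. A \<in> p \<or> - A \<in> p)"

definition left_shift :: "'a::plus \<Rightarrow> 'a set \<Rightarrow> 'a set" where
  "left_shift x A = {y. x + y \<in> A}"

definition uf_plus :: "'a::plus set set \<Rightarrow> 'a set set \<Rightarrow> 'a set set" where
  "uf_plus p q = {A. {x. left_shift x A \<in> q} \<in> p}"

definition uf_idempotent :: "'a::plus set set \<Rightarrow> bool" where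
  "uf_idempotent p \<longleftrightarrow> is_ultrafilter p \<and> uf_plus p p = p"

text \<open>Sum of a nonempty list in a semigroup (no zero needed).\<close>
fun lsum :: "('b \<Rightarrow> 'a::plus) \<Rightarrow> 'b list \<Rightarrow> 'a" where
  "lsum f [] = undefined"
| "lsum f [x] = f x"
| "lsum f (x # y # ys) = f x + lsum f (y # ys)"

text \<open>Sum over a nonempty finite set of indices (commutativity makes order irrelevant).\<close>
definition nesum :: "(nat \<Rightarrow> 'a::plus) \<Rightarrow> nat set \<Rightarrow> 'a" where
  "nesum f H = lsum f (sorted_list_of_set H)"

definition FS :: "(nat \<Rightarrow> 'a::plus) \<Rightarrow> 'a set" where
  "FS x = {nesum x H | H. finite H \<and> H \<noteq> {} \<and> H \<subseteq> {1..}}"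

end

theory Submission imports Defs "HOL-Library.Nat_Bijection" begin

text \<open>
Write \<open>A\<^sup>\<star> = {x \<in> A. -x + A \<in> p}\<close>. If \<open>p + p = p\<close> and \<open>A \<in> p\<close>, then \<open>A\<^sup>\<star> \<in> p\<close>, and
\<open>-x + A\<^sup>\<star> \<in> p\<close> for every \<open>x \<in> A\<^sup>\<star>\<close>. Put \<open>D m = C 1 \<inter> \<dots> \<inter> C m\<close>. We choose a single
sequence \<open>y\<close> term by term, taking \<open>y n\<close> in \<open>(D n)\<^sup>\<star>\<close> and in \<open>-s + (D (min H))\<^sup>\<star>\<close> for each of the
finitely many sums \<open>s\<close> of \<open>y\<close> over nonempty \<open>H \<subseteq> {..<n}\<close>; all of these sets lie in \<open>p\<close>, so their
intersection is nonempty, and then every finite sum of \<open>y\<close> over \<open>H\<close> lies in \<open>D (min H)\<close>.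
The array is \<open>x i j = y \<langle>i, j\<rangle>\<close> for a pairing function with \<open>\<langle>i, j\<rangle> \<ge> i\<close>: a sum of entries
from distinct positions in rows \<open>\<ge> i\<close> is a sum of \<open>y\<close> over indices \<open>\<ge> i\<close>, hence lies in
\<open>D i \<subseteq> C i\<close>.
\<close>

lemma lsum_Cons: "xs \<noteq> [] \<Longrightarrow> lsum f (x # xs) = f x + lsum f xs"
  by (cases xs) auto

lemma lsum_insort:
  fixes f :: "nat \<Rightarrow> 'a::ab_semigroup_add"
  assumes "xs \<noteq> []"
  shows "lsum f (insort a xs) = f a + lsum f xs"
  using assms
proof (induction xs)
  case (Cons y ys)
  show ?case
  proof (cases "ys = []")
    case True
    then show ?thesis by (simp add: add.commute)
  next
    case False
    then have "insort a ys \<noteq> []" by (cases ys) auto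
    with False Cons show ?thesis by (auto simp: lsum_Cons ac_simps)
  qed
qed simp

lemma nesum_singleton [simp]: "nesum f {a} = f a"
  by (simp add: nesum_def)

lemma nesum_insert:
  fixes f :: "nat \<Rightarrow> 'a::ab_semigroup_add"
  assumes "finite H" "H \<noteq> {}" "a \<notin> H"
  shows "nesum f (insert a H) = f a + nesum f H"
  using assms by (simp add: nesum_def lsum_insort)

lemma nesum_cong:
  fixes f :: "nat \<Rightarrow> 'a::ab_semigroup_add"
  assumes "finite H" "H \<noteq> {}" "\<And>k. k \<in> H \<Longrightarrow> f k = g k"
  shows "nesum f H = nesum g H"
  using assms by (induction H rule: finite_ne_induct) (auto simp: nesum_insert)

lemma nesum_reindex:
  fixes g :: "nat \<Rightarrow> 'a::ab_semigroup_add"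
  assumes "finite F" "F \<noteq> {}" "inj_on h F"
  shows "nesum (\<lambda>i. g (h i)) F = nesum g (h ` F)"
  using assms
proof (induction F rule: finite_ne_induct)
  case (insert x F)
  then have "h x \<notin> h ` F" by auto
  with insert show ?case by (simp add: nesum_insert)
qed simp

lemma nesum_insert_above:
  fixes y :: "nat \<Rightarrow> 'a::ab_semigroup_add"
  assumes "H \<subseteq> {..<n}" "H \<noteq> {}"
  shows "nesum (y(n := v)) (insert n H) = nesum y H + v"
    and "Min (insert n H) = Min H"
proof -
  have fin: "finite H" using assms(1) finite_subset by blast
  have "nesum (y(n := v)) H = nesum y H"
    using assms fin by (intro nesum_cong) auto
  moreover have "n \<notin> H" using assms(1) by auto
  ultimately show "nesum (y(n := v)) (insert n H) = nesum y H + v"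
    using fin assms(2) by (simp add: nesum_insert add.commute)
  have "Min H < n" using assms fin Min_in by blast
  with fin assms(2) show "Min (insert n H) = Min H" by simp
qed

lemma ultrafilter_nonempty: "is_ultrafilter p \<Longrightarrow> A \<in> p \<Longrightarrow> \<exists>x. x \<in> A"
  unfolding is_ultrafilter_def by (metis all_not_in_conv)

lemma ultrafilter_Int: "is_ultrafilter p \<Longrightarrow> A \<in> p \<Longrightarrow> B \<in> p \<Longrightarrow> A \<inter> B \<in> p"
  unfolding is_ultrafilter_def by blast

lemma ultrafilter_INT:
  assumes "is_ultrafilter p" "finite I" "\<And>i. i \<in> I \<Longrightarrow> A i \<in> p"
  shows "(\<Inter>i\<in>I. A i) \<in> p"
  using assms(2,3)
proof (induction I rule: finite_induct)
  case empty
  then show ?case using assms(1) unfolding is_ultrafilter_def by simp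
next
  case (insert i I)
  then show ?case using ultrafilter_Int[OF assms(1)] by simp
qed

definition star :: "'a::plus set set \<Rightarrow> 'a set \<Rightarrow> 'a set" where
  "star p A = {x \<in> A. left_shift x A \<in> p}"

lemma star_subset: "star p A \<subseteq> A"
  unfolding star_def by auto

lemma star_mem:
  assumes "uf_idempotent p" "A \<in> p"
  shows "star p A \<in> p"
proof -
  have "{x. left_shift x A \<in> p} \<in> p"
    using assms unfolding uf_idempotent_def uf_plus_def by blast
  with assms have "A \<inter> {x. left_shift x A \<in> p} \<in> p"
    unfolding uf_idempotent_def by (blast intro: ultrafilter_Int)
  then show ?thesis by (simp add: star_def Collect_conj_eq)
qed

lemma left_shift_star_mem:
  fixes A :: "'a::semigroup_add set"
  assumes "uf_idempotent p" "x \<in> star p A"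
  shows "left_shift x (star p A) \<in> p"
proof -
  have "left_shift x A \<in> p" using assms(2) unfolding star_def by simp
  then have "star p (left_shift x A) \<in> p" using star_mem[OF assms(1)] by blast
  moreover have "star p (left_shift x A) = left_shift x (star p A)"
    unfolding star_def left_shift_def by (auto simp: add.assoc)
  ultimately show ?thesis by simp
qed

lemma sequence_by_extension:
  assumes start: "P 0 y\<^sub>0"
    and extend: "\<And>n y. P n y \<Longrightarrow> \<exists>v. P (Suc n) (y(n := v))"
    and local: "\<And>n y z. (\<And>k. k < n \<Longrightarrow> y k = z k) \<Longrightarrow> P n y \<Longrightarrow> P n z"
  shows "\<exists>y. \<forall>n. P n y"
proof -
  define Y where "Y = rec_nat y\<^sub>0 (\<lambda>n y. y(n := SOME v. P (Suc n) (y(n := v))))"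
  have Y_Suc: "Y (Suc n) = (Y n)(n := SOME v. P (Suc n) ((Y n)(n := v)))" for n
    unfolding Y_def by simp
  have P_Y: "P n (Y n)" for n
  proof (induction n)
    case 0
    then show ?case using start by (simp add: Y_def)
  next
    case (Suc n)
    then show ?case unfolding Y_Suc using extend by (metis someI_ex)
  qed
  have Y_stable: "Y m k = Y (Suc k) k" if "k < m" for k m
    using that by (induction m) (auto simp: Y_Suc less_Suc_eq)
  have "P n (\<lambda>k. Y (Suc k) k)" for n
    by (rule local[OF _ P_Y]) (rule Y_stable)
  then show ?thesis by blast
qed

definition sums_below_star :: "'a::plus set set \<Rightarrow> (nat \<Rightarrow> 'a set) \<Rightarrow> nat \<Rightarrow> (nat \<Rightarrow> 'a) \<Rightarrow> bool" where
  "sums_below_star p D n y \<longleftrightarrow>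
     (\<forall>H. H \<subseteq> {..<n} \<and> H \<noteq> {} \<longrightarrow> nesum y H \<in> star p (D (Min H)))"

lemma sums_below_star_extend:
  fixes p :: "'a::ab_semigroup_add set set"
  assumes idem: "uf_idempotent p" and D: "\<And>m. D m \<in> p"
    and y: "sums_below_star p D n y"
  shows "\<exists>v. sums_below_star p D (Suc n) (y(n := v))"
proof -
  have uf: "is_ultrafilter p" using idem unfolding uf_idempotent_def by simp
  define \<H> where "\<H> = {H. H \<subseteq> {..<n} \<and> H \<noteq> {}}"
  have "star p (D n) \<inter> (\<Inter>H\<in>\<H>. left_shift (nesum y H) (star p (D (Min H)))) \<in> p"
    using y star_mem[OF idem D] left_shift_star_mem[OF idem]
    by (intro ultrafilter_Int[OF uf] ultrafilter_INT[OF uf]) (auto simp: \<H>_def sums_below_star_def)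
  then obtain v where v_star: "v \<in> star p (D n)"
    and v_shift: "\<And>H. H \<in> \<H> \<Longrightarrow> nesum y H + v \<in> star p (D (Min H))"
    using ultrafilter_nonempty[OF uf] unfolding left_shift_def by blast
  have "nesum (y(n := v)) H \<in> star p (D (Min H))"
    if H: "H \<subseteq> {..<Suc n}" "H \<noteq> {}" for H
  proof (cases "n \<in> H")
    case False
    then have "H \<subseteq> {..<n}" using H by (auto simp: less_Suc_eq)
    moreover from this have "nesum (y(n := v)) H = nesum y H"
      using H False finite_subset by (intro nesum_cong) auto
    ultimately show ?thesis using y H unfolding sums_below_star_def by auto
  next
    case True
    show ?thesis
    proof (cases "H = {n}")
      case False
      define G where "G = H - {n}"
      have G: "G \<in> \<H>" "H = insert n G"
        using H True False unfolding G_def \<H>_def by (auto simp: less_Suc_eq)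
      have "nesum (y(n := v)) (insert n G) = nesum y G + v" "Min (insert n G) = Min G"
        using G(1) nesum_insert_above unfolding \<H>_def by auto
      then show ?thesis unfolding G(2) using v_shift[OF G(1)] by simp
    qed (use v_star in simp)
  qed
  then show ?thesis unfolding sums_below_star_def by blast
qed

lemma idempotent_sequence_nesum_Min:
  fixes p :: "'a::ab_semigroup_add set set"
  assumes idem: "uf_idempotent p" and D: "\<And>m. D m \<in> p"
  shows "\<exists>y. \<forall>H. finite H \<and> H \<noteq> {} \<longrightarrow> nesum y H \<in> D (Min H)"
proof -
  have "\<exists>y. \<forall>n. sums_below_star p D n y"
  proof (rule sequence_by_extension)
    show "sums_below_star p D 0 (\<lambda>_. undefined)" by (simp add: sums_below_star_def)
  next
    fix n y z assume yz: "\<And>k. k < n \<Longrightarrow> y k = z k" and "sums_below_star p D n y"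
    moreover have "nesum y H = nesum z H" if "H \<subseteq> {..<n}" "H \<noteq> {}" for H
      using that yz finite_subset by (intro nesum_cong) auto
    ultimately show "sums_below_star p D n z" by (simp add: sums_below_star_def)
  qed (rule sums_below_star_extend[OF idem D])
  then obtain y where y: "\<And>n. sums_below_star p D n y" by blast
  have "nesum y H \<in> D (Min H)" if "finite H" "H \<noteq> {}" for H
  proof -
    have "H \<subseteq> {..<Suc (Max H)}" using that by (auto simp: less_Suc_eq_le)
    then show ?thesis
      using y[of "Suc (Max H)"] that star_subset unfolding sums_below_star_def by blast
  qed
  then show ?thesis by blast
qed

lemma nesum_inj_above_mem:
  fixes y :: "nat \<Rightarrow> 'a::ab_semigroup_add"
  assumes y: "\<And>H. finite H \<Longrightarrow> H \<noteq> {} \<Longrightarrow> nesum y H \<in> D (Min H)"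
    and "antimono D" "finite F" "F \<noteq> {}" "inj_on g F" "\<And>k. k \<in> F \<Longrightarrow> i \<le> g k"
  shows "nesum (\<lambda>k. y (g k)) F \<in> D i"
proof -
  have "nesum (\<lambda>k. y (g k)) F \<in> D (Min (g ` F))"
    using nesum_reindex[of F g y] y[of "g ` F"] assms by simp
  moreover have "i \<le> Min (g ` F)" using assms by simp
  ultimately show ?thesis using \<open>antimono D\<close> by (auto dest: antimonoD)
qed

lemma prod_encode_array_nesum_mem:
  fixes y :: "nat \<Rightarrow> 'a::ab_semigroup_add"
  assumes y: "\<And>H. finite H \<Longrightarrow> H \<noteq> {} \<Longrightarrow> nesum y H \<in> D (Min H)" and D: "antimono D"
  shows "FS (\<lambda>j. y (prod_encode (i, j))) \<subseteq> D i"
    and "finite F \<Longrightarrow> F \<noteq> {} \<Longrightarrow> nesum (\<lambda>i. y (prod_encode (i, j i))) F \<in> D (Min F)"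
proof -
  have pair_ge: "i \<le> prod_encode (i, j)" for i j by (simp add: prod_encode_def)
  show "FS (\<lambda>j. y (prod_encode (i, j))) \<subseteq> D i"
  proof
    fix s assume "s \<in> FS (\<lambda>j. y (prod_encode (i, j)))"
    then obtain H where H: "finite H" "H \<noteq> {}" and s: "s = nesum (\<lambda>j. y (prod_encode (i, j))) H"
      unfolding FS_def by blast
    show "s \<in> D i"
      unfolding s by (rule nesum_inj_above_mem[OF y D H]) (auto simp: inj_on_def pair_ge)
  qed
  assume F: "finite F" "F \<noteq> {}"
  have "Min F \<le> prod_encode (k, j k)" if "k \<in> F" for k
    using F that pair_ge[of k "j k"] by (meson Min_le le_trans)
  then show "nesum (\<lambda>i. y (prod_encode (i, j i))) F \<in> D (Min F)"
    by (intro nesum_inj_above_mem[OF y D F(1,2)]) (auto simp: inj_on_def)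
qed

theorem theorem2p5:
  fixes p :: "'a::ab_semigroup_add set set"
    and C :: "nat \<Rightarrow> 'a set"
  assumes "uf_idempotent p"
    and "\<forall>n\<ge>1. C n \<in> p"
  shows "\<exists>x :: nat \<Rightarrow> nat \<Rightarrow> 'a.
           (\<forall>i\<ge>1. FS (x i) \<subseteq> C i) \<and>
           (\<forall>F j. finite F \<and> F \<noteq> {} \<and> F \<subseteq> {1..} \<and> (\<forall>i\<in>F. j i \<ge> (1::nat))
                 \<longrightarrow> nesum (\<lambda>i. x i (j i)) F \<in> C (Min F))"
proof -
  define D where "D m = (\<Inter>k\<in>{1..m}. C k)" for m
  have D_mem: "D m \<in> p" for m
    unfolding D_def
  proof (rule ultrafilter_INT)
    show "is_ultrafilter p" using assms(1) by (simp add: uf_idempotent_def)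
    show "finite {1..m}" by simp
    fix i assume "i \<in> {1..m}"
    then show "C i \<in> p" using assms(2) by simp
  qed
  obtain y where y: "\<And>H. finite H \<Longrightarrow> H \<noteq> {} \<Longrightarrow> nesum y H \<in> D (Min H)"
    using idempotent_sequence_nesum_Min[of p D, OF assms(1) D_mem] by blast
  have D_antimono: "antimono D"
    unfolding D_def by (intro antimonoI INT_anti_mono) auto
  have D_C: "D i \<subseteq> C i" if "1 \<le> i" for i
    using that by (auto simp: D_def)
  define x where "x i j = y (prod_encode (i, j))" for i j
  have "FS (x i) \<subseteq> C i" if "1 \<le> i" for i
    using prod_encode_array_nesum_mem(1)[OF y D_antimono] D_C[OF that] unfolding x_def by blast
  moreover have "nesum (\<lambda>i. x i (j i)) F \<in> C (Min F)"
    if "finite F" "F \<noteq> {}" "F \<subseteq> {1..}" for F and j :: "nat \<Rightarrow> nat"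
  proof -
    have "1 \<le> Min F" using that Min_in by fastforce
    then show ?thesis
      using prod_encode_array_nesum_mem(2)[OF y D_antimono that(1,2)] D_C unfolding x_def by blast
  qed
  ultimately show ?thesis by blast
qed

end
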